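(* For every $G^*\in\mathcal{G}^*_{d,c}(n)$, \[ \lvert S_n G^* \cap \phi^{-1}(L) \rvert \geq \frac{2}{dn}\, \lvert S_n G^* \rvert, \] where $L=\{x\in\{0,1\}^{nd/2}: \lvert x\rvert\ge T_c-1\}$ and $T_c=c\cdot\frac{dn}{2}\cdot\frac{d-1}{d+1}$.
   Context: Fix $0<c<1$, $n,d$ with $dn$ even, and $T_{\max}=\binom d2\frac n3$. $\mathcal{G}^*_{d,c}(n)$ is the set of $d$-regular graphs on nodes $\{1,\dots,n\}$ with at least $c\cdot T_{\max}$ triangles, where at each node the $d$ incident edges carry distinct labels $1,\dots,d$. Configuration ordering: for edges $e=(i_1j_1)$, $f=(i_2j_2)$ with $i_1<j_1$, $i_2<j_2$, $e\prec f$ if $i_1<i_2$, or $i_1=i_2$ and the label of $e$ at $i_1$ is smaller than that of $f$. With $e_1\prec\dots\prec e_{nd/2}$ the edges and $G^*[k]$ the subgraph on $e_1,\dots,e_k$, $\phi(G^* )\in\{0,1\}^{nd/2}$ has $\phi(G^* )(k)=1$ iff $e_k$ lies in a triangle of $G^*[k]$. For $x\in\{0,1\}^{nd/2}$, $\lvert x\rvert=\sum_j x(j)$. The symmetric group $S_n$ acts on $\mathcal{G}^*_{d,c}(n)$ by permuting node labels (keeping edge labels): $G^*_\sigma$ is the result of applying $\sigma$, and $S_nG^*=\{G^*_\sigma:\sigma\in S_n\}$ is the orbit. *)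

theory Defs
  imports Complex_Main "HOL-Combinatorics.Permutations"
begin

text \<open>An edge-labelled graph on nodes {1..n} is encoded by a function lab :: nat => nat => nat:
  lab i j = 0 iff ij is not an edge; otherwise lab i j is the label of edge ij at node i.\<close>

type_synonym lgraph = "nat \<Rightarrow> nat \<Rightarrow> nat"

definition labelled_regular :: "nat \<Rightarrow> nat \<Rightarrow> lgraph \<Rightarrow> bool" where
  "labelled_regular n d G \<longleftrightarrow>
     (\<forall>i j. G i j \<noteq> 0 \<longrightarrow> i \<in> {1..n} \<and> j \<in> {1..n} \<and> i \<noteq> j \<and> G j i \<noteq> 0) \<and>
     (\<forall>i\<in>{1..n}. bij_betw (G i) {j. G i j \<noteq> 0} {1..d})"

definition num_triangles :: "lgraph \<Rightarrow> nat" where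
  "num_triangles G = card {T. \<exists>a b c. T = {a, b, c} \<and> a < b \<and> b < c \<and>
                                       G a b \<noteq> 0 \<and> G b c \<noteq> 0 \<and> G a c \<noteq> 0}"

definition T_max :: "nat \<Rightarrow> nat \<Rightarrow> real" where
  "T_max n d = real (d choose 2) * real n / 3"

definition G_star :: "nat \<Rightarrow> real \<Rightarrow> nat \<Rightarrow> lgraph set" where
  "G_star d c n = {G. labelled_regular n d G \<and> real (num_triangles G) \<ge> c * T_max n d}"

definition edges :: "lgraph \<Rightarrow> (nat \<times> nat) set" where
  "edges G = {(i, j). i < j \<and> G i j \<noteq> 0}"

definition prec :: "lgraph \<Rightarrow> nat \<times> nat \<Rightarrow> nat \<times> nat \<Rightarrow> bool" where
  "prec G e f \<longleftrightarrow> fst e < fst f \<or> (fst e = fst f \<and> G (fst e) (snd e) < G (fst f) (snd f))"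

definition nth_edge :: "lgraph \<Rightarrow> nat \<Rightarrow> nat \<times> nat" where
  "nth_edge G k = (THE e. e \<in> edges G \<and> card {f \<in> edges G. prec G f e} = k - 1)"

definition prefix_edges :: "lgraph \<Rightarrow> nat \<Rightarrow> (nat \<times> nat) set" where
  "prefix_edges G k = {e \<in> edges G. card {f \<in> edges G. prec G f e} < k}"

definition adjE :: "(nat \<times> nat) set \<Rightarrow> nat \<Rightarrow> nat \<Rightarrow> bool" where
  "adjE E a b \<longleftrightarrow> a \<noteq> b \<and> (min a b, max a b) \<in> E"

definition in_triangle :: "(nat \<times> nat) set \<Rightarrow> nat \<times> nat \<Rightarrow> bool" where
  "in_triangle E e \<longleftrightarrow> e \<in> E \<and> (\<exists>w. adjE E (fst e) w \<and> adjE E (snd e) w)"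

definition phi :: "lgraph \<Rightarrow> nat \<Rightarrow> nat" where
  "phi G k = (if in_triangle (prefix_edges G k) (nth_edge G k) then 1 else 0)"

definition weight :: "(nat \<Rightarrow> nat) \<Rightarrow> nat \<Rightarrow> nat" where
  "weight x m = (\<Sum>j = 1..m. x j)"

definition perm_act :: "(nat \<Rightarrow> nat) \<Rightarrow> lgraph \<Rightarrow> lgraph" where
  "perm_act \<sigma> G = (\<lambda>x y. G (inv \<sigma> x) (inv \<sigma> y))"

definition orbit :: "nat \<Rightarrow> lgraph \<Rightarrow> lgraph set" where
  "orbit n G = {perm_act \<sigma> G | \<sigma>. \<sigma> permutes {1..n}}"

definition T_c :: "real \<Rightarrow> nat \<Rightarrow> nat \<Rightarrow> real" where
  "T_c c d n = c * (real d * real n / 2) * ((real d - 1) / (real d + 1))"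

definition L_set :: "real \<Rightarrow> nat \<Rightarrow> nat \<Rightarrow> (nat \<Rightarrow> nat) set" where
  "L_set c d n = {x. real (weight x (d * n div 2)) \<ge> T_c c d n - 1}"

end

theory Submission
  imports Defs
begin

(*
  For a relabelling \<sigma>, call a triple (a, b, x) with a < b, ab an edge and x a common
  neighbour of a and b a min-apex triple if \<sigma> x is the least label in the closed
  neighbourhood of a. Then \<sigma> x is smaller than \<sigma> a and \<sigma> b, so in the configuration
  order of the relabelled graph both edges to \<sigma> x precede the edge {\<sigma> a, \<sigma> b}, whose
  \<phi>-bit is therefore set; distinct min-apex triples give distinct such edges. A graph with
  T triangles has at least 3T triples of this shape, and each is a min-apex triple for at
  least a 1/(d+1) fraction of S_n, so the mean of |\<phi>| over S_n, and hence over the orbit,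
  is at least 3 c T_max/(d+1) = T_c. Since |\<phi>| never exceeds dn/2, a Markov-type count
  shows that at least a 2/(dn) fraction of the orbit has |\<phi>| \<ge> T_c - 1.
*)

lemma prec_trans: "prec G e f \<Longrightarrow> prec G f g \<Longrightarrow> prec G e g"
  unfolding prec_def by auto

lemma prec_irrefl: "\<not> prec G e e"
  unfolding prec_def by auto

definition edge_rank :: "lgraph \<Rightarrow> nat \<times> nat \<Rightarrow> nat" where
  "edge_rank G e = card {f \<in> edges G. prec G f e}"

definition closing_edges :: "lgraph \<Rightarrow> (nat \<times> nat) set" where
  "closing_edges G = {(u, w) \<in> edges G. \<exists>x. (x, u) \<in> edges G \<and> (x, w) \<in> edges G}"

context
  fixes n d :: nat and G :: lgraph
  assumes regular: "labelled_regular n d G"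
begin

lemma labelled_regular_edgeD:
  assumes "G i j \<noteq> 0"
  shows "i \<in> {1..n}" "j \<in> {1..n}" "i \<noteq> j" "G j i \<noteq> 0"
  using regular assms unfolding labelled_regular_def by blast+

lemma labelled_regular_bij_betw:
  "i \<in> {1..n} \<Longrightarrow> bij_betw (G i) {j. G i j \<noteq> 0} {1..d}"
  using regular unfolding labelled_regular_def by blast

lemma neighbours_subset: "{j. G i j \<noteq> 0} \<subseteq> {1..n}"
  using labelled_regular_edgeD(2) by blast

lemma finite_neighbours: "finite {j. G i j \<noteq> 0}"
  using neighbours_subset by (rule finite_subset) simp

lemma card_neighbours: "i \<in> {1..n} \<Longrightarrow> card {j. G i j \<noteq> 0} = d"
  using bij_betw_same_card[OF labelled_regular_bij_betw] by simp

lemma finite_edges: "finite (edges G)"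
proof (rule finite_subset)
  show "edges G \<subseteq> {1..n} \<times> {1..n}"
    unfolding edges_def using labelled_regular_edgeD(1,2) by blast
qed simp

lemma arcs_eq_Sigma: "{(i, j). G i j \<noteq> 0} = Sigma {1..n} (\<lambda>i. {j. G i j \<noteq> 0})"
  using labelled_regular_edgeD(1) by blast

lemma arcs_eq_edges_Un_swap: "{(i, j). G i j \<noteq> 0} = edges G \<union> prod.swap ` edges G"
proof (rule set_eqI, clarify)
  fix i j
  have "G i j \<noteq> 0 \<longleftrightarrow> (i < j \<and> G i j \<noteq> 0) \<or> (j < i \<and> G j i \<noteq> 0)"
    using labelled_regular_edgeD(3,4) by (metis linorder_neqE_nat)
  then show "(i, j) \<in> {(i, j). G i j \<noteq> 0} \<longleftrightarrow> (i, j) \<in> edges G \<union> prod.swap ` edges G"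
    by (simp add: edges_def pair_in_swap_image)
qed

lemma handshake: "2 * card (edges G) = d * n"
proof -
  have "card {(i, j). G i j \<noteq> 0} = (\<Sum>i\<in>{1..n}. card {j. G i j \<noteq> 0})"
    unfolding arcs_eq_Sigma by (rule card_SigmaI) (use finite_neighbours in auto)
  also have "\<dots> = (\<Sum>i\<in>{1..n}. d)"
    by (rule sum.cong[OF refl]) (rule card_neighbours)
  finally have "card {(i, j). G i j \<noteq> 0} = d * n"
    by simp
  moreover have "card (edges G \<union> prod.swap ` edges G) = card (edges G) + card (prod.swap ` edges G)"
    by (rule card_Un_disjoint) (use finite_edges in \<open>auto simp: edges_def\<close>)
  moreover have "card (prod.swap ` edges G) = card (edges G)"
    by (simp add: card_image)
  ultimately show ?thesis
    unfolding arcs_eq_edges_Un_swap by simp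
qed

lemma edges_prec_total:
  assumes "e \<in> edges G" "f \<in> edges G" "e \<noteq> f"
  shows "prec G e f \<or> prec G f e"
proof (cases "fst e = fst f")
  case True
  then obtain u a b where e: "e = (u, a)" and f: "f = (u, b)"
    by (metis prod.collapse)
  have "G u a \<noteq> 0" "G u b \<noteq> 0" "a \<noteq> b"
    using assms unfolding e f edges_def by auto
  moreover have "inj_on (G u) {j. G u j \<noteq> 0}"
    using labelled_regular_bij_betw[OF labelled_regular_edgeD(1)] \<open>G u a \<noteq> 0\<close>
    by (blast intro: bij_betw_imp_inj_on)
  ultimately have "G u a \<noteq> G u b"
    by (auto dest: inj_onD)
  then show ?thesis
    unfolding prec_def e f by auto
next
  case False
  then show ?thesis
    unfolding prec_def by auto
qed

lemma edge_rank_strict_mono: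
  assumes "f \<in> edges G" "prec G f e"
  shows "edge_rank G f < edge_rank G e"
  unfolding edge_rank_def
proof (rule psubset_card_mono)
  show "finite {g \<in> edges G. prec G g e}"
    using finite_edges by simp
  show "{g \<in> edges G. prec G g f} \<subset> {g \<in> edges G. prec G g e}"
    using assms prec_trans prec_irrefl by blast
qed

lemma inj_on_edge_rank: "inj_on (edge_rank G) (edges G)"
proof (rule inj_onI, rule ccontr)
  fix e f
  assume "e \<in> edges G" "f \<in> edges G" "edge_rank G e = edge_rank G f" "e \<noteq> f"
  then show False
    using edges_prec_total edge_rank_strict_mono by (metis less_irrefl)
qed

lemma edge_rank_less_card: "e \<in> edges G \<Longrightarrow> edge_rank G e < card (edges G)"
  unfolding edge_rank_def
  by (rule psubset_card_mono[OF finite_edges]) (use prec_irrefl in blast)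

lemma nth_edge_edge_rank: "e \<in> edges G \<Longrightarrow> nth_edge G (edge_rank G e + 1) = e"
  unfolding nth_edge_def
proof (rule the_equality)
  fix e'
  assume "e \<in> edges G" "e' \<in> edges G \<and> card {f \<in> edges G. prec G f e'} = edge_rank G e + 1 - 1"
  then show "e' = e"
    using inj_on_edge_rank unfolding edge_rank_def inj_on_def by auto
qed (simp add: edge_rank_def)

lemma phi_last_edge_of_triangle:
  assumes "(x, u) \<in> edges G" "(x, w) \<in> edges G" "(u, w) \<in> edges G"
  shows "phi G (edge_rank G (u, w) + 1) = 1"
proof -
  let ?E = "prefix_edges G (edge_rank G (u, w) + 1)"
  have "x < u" "u < w"
    using assms(1,3) unfolding edges_def by auto
  then have "prec G (x, u) (u, w)" "prec G (x, w) (u, w)"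
    unfolding prec_def by auto
  then have "(x, u) \<in> ?E" "(x, w) \<in> ?E" "(u, w) \<in> ?E"
    using assms edge_rank_strict_mono unfolding prefix_edges_def edge_rank_def[symmetric]
    by fastforce+
  then have "in_triangle ?E (u, w)"
    unfolding in_triangle_def adjE_def using \<open>x < u\<close> \<open>u < w\<close>
    by (auto simp: min_def max_def intro!: exI[of _ x])
  then show ?thesis
    unfolding phi_def nth_edge_edge_rank[OF assms(3)] by simp
qed

lemma card_closing_edges_le_weight: "card (closing_edges G) \<le> weight (phi G) (card (edges G))"
proof -
  define K where "K = {k \<in> {1..card (edges G)}. phi G k = 1}"
  have "inj_on (\<lambda>e. edge_rank G e + 1) (closing_edges G)"
    using inj_on_edge_rank unfolding closing_edges_def inj_on_def by auto
  moreover have "(\<lambda>e. edge_rank G e + 1) ` closing_edges G \<subseteq> K"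
    unfolding K_def closing_edges_def
    using edge_rank_less_card phi_last_edge_of_triangle by fastforce
  ultimately have "card (closing_edges G) \<le> card K"
    by (intro card_inj_on_le) (simp_all add: K_def)
  also have "card K = (\<Sum>k\<in>K. phi G k)"
    unfolding K_def by simp
  also have "\<dots> \<le> weight (phi G) (card (edges G))"
    unfolding weight_def K_def by (rule sum_mono2) auto
  finally show ?thesis .
qed

end

lemma weight_phi_le: "weight (phi G) m \<le> m"
proof -
  have "weight (phi G) m \<le> (\<Sum>j = 1..m. 1)"
    unfolding weight_def by (rule sum_mono) (simp add: phi_def)
  then show ?thesis
    by simp
qed

lemma perm_act_apply: "\<sigma> permutes S \<Longrightarrow> perm_act \<sigma> G (\<sigma> a) (\<sigma> b) = G a b"
  unfolding perm_act_def by (simp add: permutes_inverses)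

lemma perm_act_compose:
  assumes "\<tau> permutes S" "\<sigma> permutes S"
  shows "perm_act \<tau> (perm_act \<sigma> G) = perm_act (\<tau> \<circ> \<sigma>) G"
  unfolding perm_act_def
  using o_inv_distrib[OF permutes_bij[OF assms(1)] permutes_bij[OF assms(2)]]
  by (simp add: fun_eq_iff)

lemma inj_perm_act:
  assumes "\<tau> permutes S"
  shows "inj (perm_act \<tau>)"
proof (rule injI)
  fix G H assume "perm_act \<tau> G = perm_act \<tau> H"
  then have "perm_act \<tau> G (\<tau> a) (\<tau> b) = perm_act \<tau> H (\<tau> a) (\<tau> b)" for a b
    by simp
  then show "G = H"
    by (simp add: perm_act_apply[OF assms] fun_eq_iff)
qed

lemma edge_perm_act:
  assumes "\<sigma> permutes S" "G i j \<noteq> 0" "\<sigma> i < \<sigma> j"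
  shows "(\<sigma> i, \<sigma> j) \<in> edges (perm_act \<sigma> G)"
  using assms by (simp add: edges_def perm_act_apply)

lemma labelled_regular_perm_act:
  assumes \<sigma>: "\<sigma> permutes {1..n}" and regular: "labelled_regular n d G"
  shows "labelled_regular n d (perm_act \<sigma> G)"
proof -
  have inv_in: "inv \<sigma> i \<in> {1..n} \<longleftrightarrow> i \<in> {1..n}" for i
    using permutes_in_image[OF permutes_inv[OF \<sigma>]] .
  have edge: "i \<in> {1..n} \<and> j \<in> {1..n} \<and> i \<noteq> j \<and> perm_act \<sigma> G j i \<noteq> 0"
    if "perm_act \<sigma> G i j \<noteq> 0" for i j
  proof -
    from that have "G (inv \<sigma> i) (inv \<sigma> j) \<noteq> 0"
      unfolding perm_act_def .
    from labelled_regular_edgeD[OF regular this] show ?thesis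
      unfolding perm_act_def inv_in by auto
  qed
  have labels: "bij_betw (perm_act \<sigma> G i) {j. perm_act \<sigma> G i j \<noteq> 0} {1..d}"
    if "i \<in> {1..n}" for i
  proof -
    have "bij_betw (inv \<sigma>) {j. perm_act \<sigma> G i j \<noteq> 0} {k. G (inv \<sigma> i) k \<noteq> 0}"
    proof (rule bij_betw_subset[OF permutes_bij[OF permutes_inv[OF \<sigma>]]])
      show "inv \<sigma> ` {j. perm_act \<sigma> G i j \<noteq> 0} = {k. G (inv \<sigma> i) k \<noteq> 0}"
        unfolding perm_act_def using permutes_inverses[OF \<sigma>] by (auto simp: image_iff) metis
    qed simp
    from bij_betw_trans[OF this labelled_regular_bij_betw[OF regular]] that
    show ?thesis
      unfolding perm_act_def inv_in by (simp add: o_def)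
  qed
  from edge labels show ?thesis
    unfolding labelled_regular_def by blast
qed

lemma orbit_eq_image: "orbit n G = (\<lambda>\<sigma>. perm_act \<sigma> G) ` {\<sigma>. \<sigma> permutes {1..n}}"
  unfolding orbit_def by blast

lemma finite_orbit: "finite (orbit n G)"
  unfolding orbit_eq_image by (simp add: finite_permutations)

lemma perm_act_image_orbit:
  assumes "\<tau> permutes {1..n}"
  shows "perm_act \<tau> ` orbit n G = orbit n G"
proof -
  have "perm_act \<tau> ` orbit n G = (\<lambda>\<sigma>. perm_act \<sigma> G) ` ((\<circ>) \<tau> ` {\<sigma>. \<sigma> permutes {1..n}})"
    unfolding orbit_eq_image image_image
    by (rule image_cong) (simp_all add: perm_act_compose[OF assms])
  also have "(\<circ>) \<tau> ` {\<sigma>. \<sigma> permutes {1..n}} = {\<sigma>. \<sigma> permutes {1..n}}"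
    using image_compose_permutations_left[OF assms] by (simp add: setcompr_eq_image)
  finally show ?thesis
    unfolding orbit_eq_image .
qed

lemma sum_orbit:
  fixes f :: "lgraph \<Rightarrow> real"
  shows "real (card (orbit n G)) * (\<Sum>\<sigma> | \<sigma> permutes {1..n}. f (perm_act \<sigma> G))
           = fact n * (\<Sum>H\<in>orbit n G. f H)"
proof -
  let ?P = "{\<sigma>. \<sigma> permutes {1..n}}"
  have "(\<Sum>\<tau>\<in>?P. f (perm_act \<tau> H)) = (\<Sum>\<tau>\<in>?P. f (perm_act \<tau> G))" if "H \<in> orbit n G" for H
  proof -
    obtain \<rho> where \<rho>: "\<rho> permutes {1..n}" "H = perm_act \<rho> G"
      using \<open>H \<in> orbit n G\<close> unfolding orbit_def by blast
    then have "(\<Sum>\<tau>\<in>?P. f (perm_act \<tau> H)) = (\<Sum>\<tau>\<in>?P. f (perm_act (\<tau> \<circ> \<rho>) G))"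
      by (intro sum.cong) (simp_all add: perm_act_compose)
    then show ?thesis
      using sum_permutations_compose_right[OF \<rho>(1), of "\<lambda>\<tau>. f (perm_act \<tau> G)"] by simp
  qed
  then have "real (card (orbit n G)) * (\<Sum>\<tau>\<in>?P. f (perm_act \<tau> G))
      = (\<Sum>H\<in>orbit n G. \<Sum>\<tau>\<in>?P. f (perm_act \<tau> H))"
    by simp
  also have "\<dots> = (\<Sum>\<tau>\<in>?P. \<Sum>H\<in>orbit n G. f (perm_act \<tau> H))"
    by (rule sum.swap)
  also have "\<dots> = (\<Sum>\<tau>\<in>?P. \<Sum>H\<in>orbit n G. f H)"
  proof (rule sum.cong[OF refl])
    fix \<tau> assume "\<tau> \<in> ?P"
    then have "inj_on (perm_act \<tau>) (orbit n G)" "perm_act \<tau> ` orbit n G = orbit n G"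
      using inj_perm_act perm_act_image_orbit by (auto intro: inj_on_subset)
    then show "(\<Sum>H\<in>orbit n G. f (perm_act \<tau> H)) = (\<Sum>H\<in>orbit n G. f H)"
      using sum.reindex[of "perm_act \<tau>" "orbit n G" f] by simp
  qed
  also have "\<dots> = fact n * (\<Sum>H\<in>orbit n G. f H)"
    using card_permutations[of "{1..n}" n] by simp
  finally show ?thesis .
qed

lemma fact_le_card_mult_card_permutes_min:
  fixes A S :: "'a::linorder set"
  assumes "finite A" "S \<subseteq> A" "x \<in> S"
  shows "fact (card A) \<le> card S * card {\<sigma>. \<sigma> permutes A \<and> (\<forall>y\<in>S - {x}. \<sigma> x < \<sigma> y)}"
proof -
  define B where "B y = {\<sigma>. \<sigma> permutes A \<and> (\<forall>z\<in>S - {y}. \<sigma> y < \<sigma> z)}" for y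
  have "finite S"
    using assms finite_subset by blast
  have finite_B: "finite (B y)" for y
    unfolding B_def by (rule finite_subset[OF _ finite_permutations[OF assms(1)]]) auto
  have B_le: "card (B y) \<le> card (B x)" if "y \<in> S" for y
  proof (rule card_inj_on_le[OF _ _ finite_B])
    show "inj_on (\<lambda>\<sigma>. \<sigma> \<circ> transpose x y) (B y)"
      by (rule inj_onI) (metis comp_assoc comp_id transpose_comp_involutory)
    show "(\<lambda>\<sigma>. \<sigma> \<circ> transpose x y) ` B y \<subseteq> B x"
    proof (rule image_subsetI)
      fix \<sigma> assume \<sigma>: "\<sigma> \<in> B y"
      have "\<sigma> \<circ> transpose x y permutes A"
        using \<sigma> assms \<open>y \<in> S\<close> unfolding B_def by (auto intro!: permutes_compose permutes_swap_id)
      moreover have "(\<sigma> \<circ> transpose x y) x < (\<sigma> \<circ> transpose x y) z" if "z \<in> S - {x}" for z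
        using \<sigma> that \<open>y \<in> S\<close> \<open>x \<in> S\<close> unfolding B_def by (auto simp: transpose_def)
      ultimately show "\<sigma> \<circ> transpose x y \<in> B x"
        unfolding B_def by blast
    qed
  qed
  have "{\<sigma>. \<sigma> permutes A} \<subseteq> (\<Union>y\<in>S. B y)"
  proof
    fix \<sigma> assume "\<sigma> \<in> {\<sigma>. \<sigma> permutes A}"
    then have "inj \<sigma>" "\<sigma> permutes A"
      by (auto intro: permutes_inj)
    have "Min (\<sigma> ` S) \<in> \<sigma> ` S"
      using \<open>finite S\<close> assms(3) by (intro Min_in) auto
    then obtain y where "y \<in> S" "\<sigma> y = Min (\<sigma> ` S)"
      by (metis imageE)
    have "\<sigma> y < \<sigma> z" if "z \<in> S - {y}" for z
    proof -
      have "\<sigma> y \<le> \<sigma> z"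
        using \<open>\<sigma> y = Min (\<sigma> ` S)\<close> \<open>finite S\<close> that by simp
      moreover have "\<sigma> y \<noteq> \<sigma> z"
        using \<open>inj \<sigma>\<close> that by (auto dest: injD)
      ultimately show ?thesis
        by simp
    qed
    then have "\<sigma> \<in> B y"
      using \<open>\<sigma> permutes A\<close> unfolding B_def by blast
    with \<open>y \<in> S\<close> show "\<sigma> \<in> (\<Union>y\<in>S. B y)"
      by blast
  qed
  then have "card {\<sigma>. \<sigma> permutes A} \<le> card (\<Union>y\<in>S. B y)"
    by (rule card_mono[rotated]) (simp add: \<open>finite S\<close> finite_B)
  then have "fact (card A) \<le> card (\<Union>y\<in>S. B y)"
    using card_permutations[OF refl assms(1)] by simp
  also have "\<dots> \<le> (\<Sum>y\<in>S. card (B y))"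
    by (rule card_UN_le[OF \<open>finite S\<close>])
  also have "\<dots> \<le> card S * card (B x)"
    using sum_mono[of S "\<lambda>y. card (B y)" "\<lambda>_. card (B x)"] B_le by simp
  finally show ?thesis
    unfolding B_def .
qed

definition edge_apex_triples :: "lgraph \<Rightarrow> (nat \<times> nat \<times> nat) set" where
  "edge_apex_triples G = {(a, b, x). a < b \<and> G a b \<noteq> 0 \<and> G a x \<noteq> 0 \<and> G b x \<noteq> 0}"

definition closed_nbhd :: "lgraph \<Rightarrow> nat \<Rightarrow> nat set" where
  "closed_nbhd G a = insert a {j. G a j \<noteq> 0}"

definition min_apex_triples :: "(nat \<Rightarrow> nat) \<Rightarrow> lgraph \<Rightarrow> (nat \<times> nat \<times> nat) set" where
  "min_apex_triples \<sigma> G =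
     {(a, b, x) \<in> edge_apex_triples G. \<forall>y\<in>closed_nbhd G a - {x}. \<sigma> x < \<sigma> y}"

context
  fixes n d :: nat and G :: lgraph
  assumes regular: "labelled_regular n d G"
begin

lemma finite_edge_apex_triples: "finite (edge_apex_triples G)"
proof (rule finite_subset)
  show "edge_apex_triples G \<subseteq> {1..n} \<times> {1..n} \<times> {1..n}"
    unfolding edge_apex_triples_def using labelled_regular_edgeD(1,2)[OF regular] by blast
qed simp

lemma three_num_triangles_le: "3 * num_triangles G \<le> card (edge_apex_triples G)"
proof -
  define T where "T = {(a, b, c). a < b \<and> b < c \<and> G a b \<noteq> 0 \<and> G b c \<noteq> 0 \<and> G a c \<noteq> 0}"
  have "finite T"
    by (rule finite_subset[OF _ finite_edge_apex_triples]) (auto simp: T_def edge_apex_triples_def)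
  have "num_triangles G = card ((\<lambda>(a, b, c). {a, b, c}) ` T)"
    unfolding num_triangles_def T_def by (rule arg_cong[where f = card]) (auto simp: image_iff)
  also have "\<dots> \<le> card T"
    using \<open>finite T\<close> by (rule card_image_le)
  finally have "num_triangles G \<le> card T" .
  define r1 r2 :: "nat \<times> nat \<times> nat \<Rightarrow> nat \<times> nat \<times> nat"
    where "r1 = (\<lambda>(a, b, c). (b, c, a))" and "r2 = (\<lambda>(a, b, c). (a, c, b))"
  have sym: "G j i \<noteq> 0" if "G i j \<noteq> 0" for i j
    using labelled_regular_edgeD(4)[OF regular that] .
  have "T \<inter> r1 ` T = {}" "(T \<union> r1 ` T) \<inter> r2 ` T = {}"
    unfolding T_def r1_def r2_def by auto
  then have "card (T \<union> r1 ` T \<union> r2 ` T) = card T + card (r1 ` T) + card (r2 ` T)"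
    using \<open>finite T\<close> by (simp add: card_Un_disjoint)
  also have "\<dots> = 3 * card T"
  proof -
    have "inj_on r1 T" "inj_on r2 T"
      unfolding inj_on_def r1_def r2_def by auto
    then show ?thesis
      by (simp add: card_image)
  qed
  moreover have "T \<union> r1 ` T \<union> r2 ` T \<subseteq> edge_apex_triples G"
    unfolding T_def r1_def r2_def edge_apex_triples_def using sym by auto
  ultimately have "3 * card T \<le> card (edge_apex_triples G)"
    using card_mono[OF finite_edge_apex_triples] by metis
  with \<open>num_triangles G \<le> card T\<close> show ?thesis
    by linarith
qed

lemma card_closed_nbhd:
  assumes "a \<in> {1..n}"
  shows "card (closed_nbhd G a) = d + 1"
proof -
  have "a \<notin> {j. G a j \<noteq> 0}"
    using labelled_regular_edgeD(3)[OF regular] by blast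
  then show ?thesis
    unfolding closed_nbhd_def
    using card_neighbours[OF regular assms] finite_neighbours[OF regular] by simp
qed

lemma closed_nbhd_subset: "a \<in> {1..n} \<Longrightarrow> closed_nbhd G a \<subseteq> {1..n}"
  unfolding closed_nbhd_def using neighbours_subset[OF regular] by blast

lemma fact_le_card_permutes_min_apex:
  assumes "p \<in> edge_apex_triples G"
  shows "fact n \<le> (d + 1) * card {\<sigma>. \<sigma> permutes {1..n} \<and> p \<in> min_apex_triples \<sigma> G}"
proof -
  obtain a b x where p: "p = (a, b, x)" and "G a b \<noteq> 0" "G a x \<noteq> 0"
    using assms unfolding edge_apex_triples_def by auto
  then have "a \<in> {1..n}" "x \<in> closed_nbhd G a"
    using labelled_regular_edgeD(1)[OF regular] unfolding closed_nbhd_def by auto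
  have "{\<sigma>. \<sigma> permutes {1..n} \<and> p \<in> min_apex_triples \<sigma> G}
      = {\<sigma>. \<sigma> permutes {1..n} \<and> (\<forall>y\<in>closed_nbhd G a - {x}. \<sigma> x < \<sigma> y)}"
    using assms unfolding p min_apex_triples_def by simp
  moreover have "fact (card {1..n}) \<le> card (closed_nbhd G a) *
      card {\<sigma>. \<sigma> permutes {1..n} \<and> (\<forall>y\<in>closed_nbhd G a - {x}. \<sigma> x < \<sigma> y)}"
    using \<open>a \<in> {1..n}\<close> \<open>x \<in> closed_nbhd G a\<close>
    by (intro fact_le_card_mult_card_permutes_min closed_nbhd_subset) simp_all
  ultimately show ?thesis
    using card_closed_nbhd[OF \<open>a \<in> {1..n}\<close>] by simp
qed

lemma card_min_apex_triples_le_closing_edges: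
  assumes \<sigma>: "\<sigma> permutes {1..n}"
  shows "card (min_apex_triples \<sigma> G) \<le> card (closing_edges (perm_act \<sigma> G))"
proof -
  define f where "f = (\<lambda>(a, b, x :: nat). (min (\<sigma> a) (\<sigma> b), max (\<sigma> a) (\<sigma> b)))"
  have sym: "G j i \<noteq> 0" if "G i j \<noteq> 0" for i j
    using labelled_regular_edgeD(4)[OF regular that] .
  have "inj \<sigma>"
    using \<sigma> by (rule permutes_inj)
  have "finite (closing_edges (perm_act \<sigma> G))"
    using finite_edges[OF labelled_regular_perm_act[OF \<sigma> regular]]
    unfolding closing_edges_def by (rule finite_subset[rotated]) auto
  moreover have "f ` min_apex_triples \<sigma> G \<subseteq> closing_edges (perm_act \<sigma> G)"
  proof (rule image_subsetI, clarify)
    fix a b x assume p: "(a, b, x) \<in> min_apex_triples \<sigma> G"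
    then have "a < b" "G a b \<noteq> 0" "G a x \<noteq> 0" "G b x \<noteq> 0"
      unfolding min_apex_triples_def edge_apex_triples_def by auto
    then have "a \<noteq> x" "b \<noteq> x" "a \<in> closed_nbhd G a" "b \<in> closed_nbhd G a"
      using labelled_regular_edgeD(3)[OF regular] unfolding closed_nbhd_def by auto
    moreover have "\<forall>y\<in>closed_nbhd G a - {x}. \<sigma> x < \<sigma> y"
      using p unfolding min_apex_triples_def by simp
    ultimately have "\<sigma> x < \<sigma> a" "\<sigma> x < \<sigma> b"
      by blast+
    moreover have "\<sigma> a \<noteq> \<sigma> b"
      using \<open>a < b\<close> \<open>inj \<sigma>\<close> by (auto simp: inj_eq)
    moreover have "G x a \<noteq> 0" "G x b \<noteq> 0" "G b a \<noteq> 0"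
      using sym \<open>G a b \<noteq> 0\<close> \<open>G a x \<noteq> 0\<close> \<open>G b x \<noteq> 0\<close> by auto
    ultimately have "(\<sigma> x, \<sigma> a) \<in> edges (perm_act \<sigma> G)" "(\<sigma> x, \<sigma> b) \<in> edges (perm_act \<sigma> G)"
      "(min (\<sigma> a) (\<sigma> b), max (\<sigma> a) (\<sigma> b)) \<in> edges (perm_act \<sigma> G)"
      using edge_perm_act[OF \<sigma>] \<open>G a b \<noteq> 0\<close> by (simp_all add: min_def max_def)
    then show "f (a, b, x) \<in> closing_edges (perm_act \<sigma> G)"
      unfolding f_def closing_edges_def by (auto simp: min_def max_def)
  qed
  moreover have "inj_on f (min_apex_triples \<sigma> G)"
  proof (rule inj_onI)
    fix t t' assume "t \<in> min_apex_triples \<sigma> G" "t' \<in> min_apex_triples \<sigma> G" "f t = f t'"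
    moreover obtain a b x a' b' x' where t: "t = (a, b, x)" "t' = (a', b', x')"
      by (metis prod_cases3)
    ultimately have p: "(a, b, x) \<in> min_apex_triples \<sigma> G"
      and q: "(a', b', x') \<in> min_apex_triples \<sigma> G" and "f (a, b, x) = f (a', b', x')"
      by simp_all
    then have "{\<sigma> a, \<sigma> b} = {\<sigma> a', \<sigma> b'}"
      unfolding f_def by (auto simp: min_def max_def split: if_splits)
    then have "\<sigma> ` {a, b} = \<sigma> ` {a', b'}"
      by simp
    then have "{a, b} = {a', b'}"
      by (simp only: inj_image_eq_iff[OF \<open>inj \<sigma>\<close>])
    moreover have "a < b" "a' < b'" "G a x \<noteq> 0" "G a' x' \<noteq> 0"
      using p q unfolding min_apex_triples_def edge_apex_triples_def by auto
    ultimately have "a' = a" "b' = b"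
      by (auto simp: doubleton_eq_iff)
    have "x = x'"
    proof (rule ccontr)
      assume "x \<noteq> x'"
      then have "\<sigma> x < \<sigma> x'" "\<sigma> x' < \<sigma> x"
        using p q \<open>G a x \<noteq> 0\<close> \<open>G a' x' \<noteq> 0\<close> \<open>a' = a\<close>
        unfolding min_apex_triples_def closed_nbhd_def by auto
      then show False
        by simp
    qed
    with t \<open>a' = a\<close> \<open>b' = b\<close> show "t = t'"
      by simp
  qed
  ultimately show ?thesis
    by (intro card_inj_on_le)
qed

lemma three_num_triangles_fact_le_sum_weight_phi:
  "3 * num_triangles G * fact n
     \<le> (d + 1) * (\<Sum>\<sigma> | \<sigma> permutes {1..n}. weight (phi (perm_act \<sigma> G)) (d * n div 2))"
proof -
  let ?P = "{\<sigma>. \<sigma> permutes {1..n}}" and ?D = "edge_apex_triples G"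
  have "finite ?P" "finite ?D"
    by (simp_all add: finite_permutations finite_edge_apex_triples)
  have double_count: "(\<Sum>p\<in>?D. card {\<sigma>. \<sigma> permutes {1..n} \<and> p \<in> min_apex_triples \<sigma> G})
      = (\<Sum>\<sigma>\<in>?P. card (min_apex_triples \<sigma> G))"
  proof -
    have "min_apex_triples \<sigma> G = {p \<in> ?D. p \<in> min_apex_triples \<sigma> G}" for \<sigma>
      unfolding min_apex_triples_def by auto
    then show ?thesis
      using sum.swap_restrict[OF \<open>finite ?D\<close> \<open>finite ?P\<close>,
          where g = "\<lambda>_ _. 1::nat" and R = "\<lambda>p \<sigma>. p \<in> min_apex_triples \<sigma> G"]
      by simp
  qed
  have min_apex_le_weight: "card (min_apex_triples \<sigma> G) \<le> weight (phi (perm_act \<sigma> G)) (d * n div 2)"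
    if "\<sigma> \<in> ?P" for \<sigma>
  proof -
    have "labelled_regular n d (perm_act \<sigma> G)"
      using labelled_regular_perm_act[OF _ regular] that by simp
    have "card (min_apex_triples \<sigma> G) \<le> card (closing_edges (perm_act \<sigma> G))"
      using card_min_apex_triples_le_closing_edges that by simp
    also have "\<dots> \<le> weight (phi (perm_act \<sigma> G)) (card (edges (perm_act \<sigma> G)))"
      by (rule card_closing_edges_le_weight) fact
    also have "card (edges (perm_act \<sigma> G)) = d * n div 2"
      using handshake[OF \<open>labelled_regular n d (perm_act \<sigma> G)\<close>] by simp
    finally show ?thesis .
  qed
  have "3 * num_triangles G * fact n \<le> (\<Sum>p\<in>?D. fact n)"
    using three_num_triangles_le by simp
  also have "\<dots> \<le> (\<Sum>p\<in>?D. (d + 1) * card {\<sigma>. \<sigma> permutes {1..n} \<and> p \<in> min_apex_triples \<sigma> G})"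
    by (rule sum_mono) (rule fact_le_card_permutes_min_apex)
  also have "\<dots> = (d + 1) * (\<Sum>\<sigma>\<in>?P. card (min_apex_triples \<sigma> G))"
    by (simp only: double_count flip: sum_distrib_left)
  also have "\<dots> \<le> (d + 1) * (\<Sum>\<sigma>\<in>?P. weight (phi (perm_act \<sigma> G)) (d * n div 2))"
    by (intro mult_left_mono sum_mono min_apex_le_weight) simp_all
  finally show ?thesis
    by simp
qed

end

lemma T_c_eq: "(real d + 1) * T_c c d n = 3 * c * T_max n d"
proof -
  have "even (d * (d - 1))"
    by (cases "even d") auto
  then have "2 * (d choose 2) = d * (d - 1)"
    unfolding choose_two by simp
  then have "2 * real (d choose 2) = real d * real (d - 1)"
    by (metis of_nat_mult of_nat_numeral)
  then have choose: "real (d choose 2) = real d * (real d - 1) / 2"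
    by (cases "d = 0") (simp_all add: of_nat_diff)
  show ?thesis
    unfolding T_c_def T_max_def choose by (simp add: field_simps)
qed

lemma fact_mult_T_c_le_sum_weight_phi:
  assumes regular: "labelled_regular n d G" and triangles: "c * T_max n d \<le> real (num_triangles G)"
  shows "fact n * T_c c d n
           \<le> (\<Sum>\<sigma> | \<sigma> permutes {1..n}. real (weight (phi (perm_act \<sigma> G)) (d * n div 2)))"
proof -
  have "(real d + 1) * (fact n * T_c c d n) = fact n * (3 * (c * T_max n d))"
    using T_c_eq[of d c n] by (simp add: algebra_simps)
  also have "\<dots> \<le> fact n * (3 * real (num_triangles G))"
    using triangles by simp
  also have "\<dots> \<le> (real d + 1) *
      (\<Sum>\<sigma> | \<sigma> permutes {1..n}. real (weight (phi (perm_act \<sigma> G)) (d * n div 2)))"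
  proof -
    have "real (3 * num_triangles G * fact n)
        \<le> real ((d + 1) * (\<Sum>\<sigma> | \<sigma> permutes {1..n}. weight (phi (perm_act \<sigma> G)) (d * n div 2)))"
      using three_num_triangles_fact_le_sum_weight_phi[OF regular] by (simp only: of_nat_le_iff)
    then show ?thesis
      by (simp add: of_nat_sum algebra_simps)
  qed
  finally show ?thesis
    by (rule mult_left_le_imp_le) simp
qed

lemma orbit_mean_weight_phi_ge:
  assumes "G \<in> G_star d c n"
  shows "real (card (orbit n G)) * T_c c d n \<le> (\<Sum>H\<in>orbit n G. real (weight (phi H) (d * n div 2)))"
proof -
  have "labelled_regular n d G" "c * T_max n d \<le> real (num_triangles G)"
    using assms unfolding G_star_def by simp_all
  then have "real (card (orbit n G)) * (fact n * T_c c d n)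
      \<le> real (card (orbit n G)) *
         (\<Sum>\<sigma> | \<sigma> permutes {1..n}. real (weight (phi (perm_act \<sigma> G)) (d * n div 2)))"
    by (intro mult_left_mono fact_mult_T_c_le_sum_weight_phi) simp_all
  also have "\<dots> = fact n * (\<Sum>H\<in>orbit n G. real (weight (phi H) (d * n div 2)))"
    by (rule sum_orbit)
  finally have "fact n * (real (card (orbit n G)) * T_c c d n)
      \<le> fact n * (\<Sum>H\<in>orbit n G. real (weight (phi H) (d * n div 2)))"
    by (simp only: mult.left_commute)
  then show ?thesis
    by (rule mult_left_le_imp_le) simp
qed

lemma card_le_mult_card_ge_mean_minus_one:
  fixes w :: "'a \<Rightarrow> real"
  assumes "finite A" and nonneg: "\<And>x. x \<in> A \<Longrightarrow> 0 \<le> w x" and bounded: "\<And>x. x \<in> A \<Longrightarrow> w x \<le> M"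
    and "1 \<le> M" and mean: "real (card A) * t \<le> (\<Sum>x\<in>A. w x)"
  shows "real (card A) \<le> M * real (card {x \<in> A. t - 1 \<le> w x})"
proof (cases "t < 1")
  case True
  then have "{x \<in> A. t - 1 \<le> w x} = A"
    using nonneg by force
  then show ?thesis
    using mult_right_mono[OF \<open>1 \<le> M\<close>, of "real (card A)"] by simp
next
  case False
  define B where "B = {x \<in> A. t - 1 \<le> w x}"
  have "B \<subseteq> A" "finite B"
    using \<open>finite A\<close> unfolding B_def by auto
  have card_A: "real (card A) = real (card B) + real (card (A - B))"
    using card_Diff_subset[OF \<open>finite B\<close> \<open>B \<subseteq> A\<close>] card_mono[OF \<open>finite A\<close> \<open>B \<subseteq> A\<close>] by simp
  have "(\<Sum>x\<in>A. w x) = (\<Sum>x\<in>B. w x) + (\<Sum>x\<in>A - B. w x)"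
    using sum.subset_diff[OF \<open>B \<subseteq> A\<close> \<open>finite A\<close>] by (simp add: add.commute)
  also have "\<dots> \<le> real (card B) * M + real (card (A - B)) * (t - 1)"
  proof (rule add_mono)
    show "(\<Sum>x\<in>B. w x) \<le> real (card B) * M"
      using sum_mono[of B w "\<lambda>_. M"] bounded \<open>B \<subseteq> A\<close> by auto
    have "w x \<le> t - 1" if "x \<in> A - B" for x
      using that unfolding B_def by auto
    then show "(\<Sum>x\<in>A - B. w x) \<le> real (card (A - B)) * (t - 1)"
      using sum_mono[of "A - B" w "\<lambda>_. t - 1"] by simp
  qed
  finally have "real (card A) * t \<le> real (card B) * M + real (card (A - B)) * (t - 1)"
    using mean by linarith
  moreover have "real (card B) \<le> real (card B) * t"
    using mult_left_mono[of 1 t "real (card B)"] False by simp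
  ultimately show ?thesis
    unfolding card_A B_def[symmetric] by (simp add: algebra_simps)
qed

theorem lemma2:
  fixes c :: real and n d :: nat and G :: lgraph
  assumes "0 < c" "c < 1" "even (d * n)" "G \<in> G_star d c n"
  shows "real (card (orbit n G \<inter> {H. phi H \<in> L_set c d n}))
           \<ge> 2 / (real d * real n) * real (card (orbit n G))"
proof (cases "d * n = 0")
  case False
  define M where "M = d * n div 2"
  have "real d * real n = 2 * real M" "1 \<le> M"
    using \<open>even (d * n)\<close> False unfolding M_def by (auto simp flip: of_nat_mult)
  let ?good = "{H \<in> orbit n G. T_c c d n - 1 \<le> real (weight (phi H) M)}"
  have "orbit n G \<inter> {H. phi H \<in> L_set c d n} = ?good"
    unfolding L_set_def M_def by auto
  moreover have "real (card (orbit n G)) \<le> real M * real (card ?good)"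
    using finite_orbit weight_phi_le \<open>1 \<le> M\<close> orbit_mean_weight_phi_ge[OF assms(4)] unfolding M_def
    by (intro card_le_mult_card_ge_mean_minus_one) simp_all
  ultimately show ?thesis
    using \<open>real d * real n = 2 * real M\<close> \<open>1 \<le> M\<close> by (simp add: field_simps)
next
  case True
  then have "2 / (real d * real n) = 0"
    by simp
  then show ?thesis
    by (simp only: mult_zero_left of_nat_0_le_iff)
qed

end
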